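(* Let $\mathcal{H}_X,\mathcal{H}_Y$ be reproducing kernel Hilbert spaces, let $(X_1,Y_1),\dots,(X_n,Y_n)$ be data points with centered feature vectors $\tilde{\Phi}(X_i)\in\mathcal{H}_X$, $\tilde{\Phi}(Y_i)\in\mathcal{H}_Y$. Let $\zeta:[0,\infty)\to\mathbb{R}$ satisfy (i) $\zeta$ is non-decreasing, $\zeta(0)=0$ and $\zeta(t)/t\to0$ as $t\to0$; (ii) $\varphi(t)=\zeta'(t)/t$ exists and is finite; (iii) $\zeta'$ and $\varphi$ are continuous and bounded; and assume moreover that $\varphi$ is non-increasing. Let $$J(\Sigma)=\sum_{i=1}^n \zeta\big(\|\tilde{\Phi}(X_i)\otimes\tilde{\Phi}(Y_i)-\Sigma\|\big),\qquad S(\Sigma)=\sum_{i=1}^n\varphi\big(\|\tilde{\Phi}(X_i)\otimes\tilde{\Phi}(Y_i)-\Sigma\|\big)\big(\tilde{\Phi}(X_i)\otimes\tilde{\Phi}(Y_i)-\Sigma\big),$$ norms being in $\mathcal{H}_X\otimes\mathcal{H}_Y$, and let $U=\{\Sigma\in\mathcal{H}_X\otimes\mathcal{H}_Y: S(\Sigma)=0\}$. Let $\{\Sigma^{(h)}\}_{h\ge1}$ be the sequence produced by the KIRWLS algorithm, i.e. $\Sigma^{(h+1)}=\sum_{i=1}^n w_i^{(h)}\tilde{\Phi}(X_i)\otimes\tilde{\Phi}(Y_i)$ with $$w_i^{(h)}=\frac{\varphi(\|\tilde{\Phi}(X_i)\otimes\tilde{\Phi}(Y_i)-\Sigma^{(h)}\|)}{\sum_{b=1}^n\varphi(\|\tilde{\Phi}(X_b)\otimes\tilde{\Phi}(Y_b)-\Sigma^{(h)}\|)}.$$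 Then $J(\Sigma^{(h)})$ decreases monotonically at every iteration and converges, and $$\inf_{\Sigma\in U}\|\Sigma^{(h)}-\Sigma\|_{\mathcal{H}_X\otimes\mathcal{H}_Y}\to0\quad\text{as }h\to\infty.$$
   Context: Centered feature vectors are $\tilde{\Phi}(X_i)=k_X(\cdot,X_i)-m_X$, $\tilde{\Phi}(Y_i)=k_Y(\cdot,Y_i)-m_Y$ for positive definite kernels $k_X,k_Y$ and fixed (empirical, possibly weighted) kernel mean elements $m_X\in\mathcal{H}_X$, $m_Y\in\mathcal{H}_Y$. $\mathcal{H}_X\otimes\mathcal{H}_Y$ is the Hilbert tensor product (Hilbert–Schmidt norm). *)

theory Defs
  imports "HOL-Analysis.Analysis"
begin

definition is_hilbert_tensor ::
  "('a::real_inner \<Rightarrow> 'b::real_inner \<Rightarrow> 'h::real_inner) \<Rightarrow> bool" where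
  "is_hilbert_tensor tens \<longleftrightarrow>
     bounded_bilinear tens \<and>
     (\<forall>a b c d. inner (tens a b) (tens c d) = inner a c * inner b d) \<and>
     closure (span (range (\<lambda>(a, b). tens a b))) = UNIV"

text \<open>Objective J, estimating-equation map S and its zero set U
  (points are indexed by i < n; Z i plays the role of the tensor of centered features).\<close>
definition obj_J :: "(real \<Rightarrow> real) \<Rightarrow> nat \<Rightarrow> (nat \<Rightarrow> 'h::real_normed_vector) \<Rightarrow> 'h \<Rightarrow> real" where
  "obj_J \<zeta> n Z \<Sigma> = (\<Sum>i<n. \<zeta> (norm (Z i - \<Sigma>)))"

definition map_S :: "(real \<Rightarrow> real) \<Rightarrow> nat \<Rightarrow> (nat \<Rightarrow> 'h::real_normed_vector) \<Rightarrow> 'h \<Rightarrow> 'h" where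
  "map_S \<phi> n Z \<Sigma> = (\<Sum>i<n. \<phi> (norm (Z i - \<Sigma>)) *\<^sub>R (Z i - \<Sigma>))"

definition zero_set_U :: "(real \<Rightarrow> real) \<Rightarrow> nat \<Rightarrow> (nat \<Rightarrow> 'h::real_normed_vector) \<Rightarrow> 'h set" where
  "zero_set_U \<phi> n Z = {\<Sigma>. map_S \<phi> n Z \<Sigma> = 0}"

definition kirwls_weight :: "(real \<Rightarrow> real) \<Rightarrow> nat \<Rightarrow> (nat \<Rightarrow> 'h::real_normed_vector) \<Rightarrow> 'h \<Rightarrow> nat \<Rightarrow> real" where
  "kirwls_weight \<phi> n Z \<Sigma> i = \<phi> (norm (Z i - \<Sigma>)) / (\<Sum>b<n. \<phi> (norm (Z b - \<Sigma>)))"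

end

theory Submission
  imports Defs
begin

text \<open>
  KIRWLS is a majorize-minimize scheme. Because \<open>\<phi>\<close> is non-increasing,
  \<open>\<zeta> r \<le> \<zeta> r0 + \<phi> r0 / 2 * (r\<^sup>2 - r0\<^sup>2)\<close>, so at \<open>\<Sigma> h\<close> the objective \<open>J\<close> is majorized by
  a weighted least-squares function whose minimizer is the weighted mean \<open>\<Sigma> (h + 1)\<close>. This
  gives \<open>J (\<Sigma> (h + 1)) + W h / 2 * \<parallel>\<Sigma> (h + 1) - \<Sigma> h\<parallel>\<^sup>2 \<le> J (\<Sigma> h)\<close> with \<open>W h\<close> the total
  weight; as \<open>J \<ge> 0\<close>, \<open>J\<close> converges and the decrements tend to zero. Since
  \<open>S (\<Sigma> h) = W h * (\<Sigma> (h + 1) - \<Sigma> h)\<close> and \<open>W\<close> is bounded, \<open>S (\<Sigma> h) \<rightarrow> 0\<close>. The iterates stay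
  in the convex hull of the data, a compact set on which the continuous map \<open>S\<close> can only be
  small near its zero set \<open>U\<close>.
\<close>

lemma has_real_derivative_at_if_within_atLeast:
  assumes "(f has_real_derivative D) (at x within {a..})" and "x > a"
  shows "(f has_real_derivative D) (at x)"
proof -
  have "at x within {a..} = at x"
    by (rule at_within_interior) (use assms(2) in \<open>simp add: interior_real_atLeast\<close>)
  with assms(1) show ?thesis by simp
qed

lemma quadratic_majorizer:
  fixes \<zeta> \<zeta>' \<phi> :: "real \<Rightarrow> real"
  assumes deriv: "\<And>t. t \<ge> 0 \<Longrightarrow> (\<zeta> has_real_derivative \<zeta>' t) (at t within {0..})"
    and phi: "\<And>t. t > 0 \<Longrightarrow> \<phi> t = \<zeta>' t / t"
    and antimono: "antimono_on {0..} \<phi>"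
    and "r \<ge> 0" "r0 \<ge> 0"
  shows "\<zeta> r \<le> \<zeta> r0 + \<phi> r0 / 2 * (r\<^sup>2 - r0\<^sup>2)"
proof -
  define g where "g x = \<zeta> x - \<phi> r0 / 2 * x\<^sup>2" for x
  have "continuous_on {0..} \<zeta>"
    unfolding continuous_on_eq_continuous_within using deriv DERIV_continuous by blast
  then have g_cont: "continuous_on {a..b} g" if "0 \<le> a" for a b
    unfolding g_def using that by (auto intro!: continuous_intros elim: continuous_on_subset)
  have g_deriv: "(g has_real_derivative x * (\<phi> x - \<phi> r0)) (at x)" if "x > 0" for x
  proof -
    have "(\<zeta> has_real_derivative \<zeta>' x) (at x)"
      using deriv that by (intro has_real_derivative_at_if_within_atLeast) auto
    then have "(g has_real_derivative \<zeta>' x - \<phi> r0 / 2 * (2 * x)) (at x)"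
      unfolding g_def by (auto intro!: derivative_eq_intros)
    with phi[OF that] that show ?thesis by (simp add: algebra_simps)
  qed
  \<comment> \<open>Since \<open>\<phi>\<close> is non-increasing, \<open>g' x = x (\<phi> x - \<phi> r0)\<close> changes sign from \<open>+\<close> to \<open>-\<close> at \<open>r0\<close>.\<close>
  have "g r \<le> g r0"
  proof (cases "r \<le> r0")
    case True
    show ?thesis
    proof (rule DERIV_nonneg_imp_increasing_open[OF True _ g_cont])
      fix x assume "r < x" "x < r0"
      moreover have "\<phi> r0 \<le> \<phi> x"
        using \<open>r < x\<close> \<open>x < r0\<close> \<open>r \<ge> 0\<close> by (intro monotone_onD[OF antimono]) auto
      ultimately show "\<exists>y. DERIV g x :> y \<and> y \<ge> 0"
        using g_deriv[of x] \<open>r \<ge> 0\<close> by (intro exI[of _ "x * (\<phi> x - \<phi> r0)"]) auto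
    qed fact
  next
    case False
    show ?thesis
    proof (rule DERIV_nonpos_imp_decreasing_open[of r0 r, OF _ _ g_cont])
      fix x assume "r0 < x" "x < r"
      moreover have "\<phi> x \<le> \<phi> r0"
        using \<open>r0 < x\<close> \<open>r0 \<ge> 0\<close> by (intro monotone_onD[OF antimono]) auto
      ultimately show "\<exists>y. DERIV g x :> y \<and> y \<le> 0"
        using g_deriv[of x] \<open>r0 \<ge> 0\<close>
        by (intro exI[of _ "x * (\<phi> x - \<phi> r0)"]) (auto simp: mult_nonneg_nonpos)
    qed (use False \<open>r0 \<ge> 0\<close> in auto)
  qed
  then show ?thesis unfolding g_def by (simp add: algebra_simps)
qed

lemma derivative_ratio_nonneg:
  fixes \<zeta> \<zeta>' \<phi> :: "real \<Rightarrow> real"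
  assumes mono: "mono_on {0..} \<zeta>"
    and deriv: "\<And>t. t \<ge> 0 \<Longrightarrow> (\<zeta> has_real_derivative \<zeta>' t) (at t within {0..})"
    and phi: "\<And>t. t > 0 \<Longrightarrow> \<phi> t = \<zeta>' t / t"
    and antimono: "antimono_on {0..} \<phi>"
    and "t \<ge> 0"
  shows "\<phi> t \<ge> 0"
proof -
  have pos: "\<phi> s \<ge> 0" if "s > 0" for s
  proof -
    have "(\<zeta> has_real_derivative \<zeta>' s) (at s)"
      using deriv that by (intro has_real_derivative_at_if_within_atLeast) auto
    then have "\<zeta>' s \<ge> 0"
      by (rule mono_on_imp_deriv_nonneg[OF mono]) (use that in \<open>simp add: interior_real_atLeast\<close>)
    with phi[OF that] that show ?thesis by simp
  qed
  have "\<phi> 1 \<le> \<phi> t" if "t = 0"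
    using that by (intro monotone_onD[OF antimono]) auto
  with pos[of t] pos[of 1] \<open>t \<ge> 0\<close> show ?thesis by force
qed

lemma weighted_sum_diff_eq:
  fixes Z :: "nat \<Rightarrow> 'h::real_vector"
  assumes "(\<Sum>i<n. c i) \<noteq> 0"
  shows "(\<Sum>i<n. c i *\<^sub>R (Z i - S)) = (\<Sum>i<n. c i) *\<^sub>R ((\<Sum>i<n. (c i / (\<Sum>j<n. c j)) *\<^sub>R Z i) - S)"
  using assms by (simp add: scaleR_diff_right sum_subtractf scaleR_sum_left scaleR_sum_right)

lemma weighted_sum_sq_dist_mean:
  fixes Z :: "nat \<Rightarrow> 'h::real_inner"
  assumes "(\<Sum>i<n. c i) \<noteq> 0"
  defines "M \<equiv> \<Sum>i<n. (c i / (\<Sum>j<n. c j)) *\<^sub>R Z i"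
  shows "(\<Sum>i<n. c i * (norm (Z i - M))\<^sup>2)
    = (\<Sum>i<n. c i * (norm (Z i - S))\<^sup>2) - (\<Sum>i<n. c i) * (norm (M - S))\<^sup>2"
proof -
  have expand: "(norm (Z i - M))\<^sup>2 = (norm (Z i - S))\<^sup>2 - 2 * inner (Z i - S) (M - S) + (norm (M - S))\<^sup>2" for i
  proof -
    have "(norm (Z i - M))\<^sup>2 = (norm ((Z i - S) - (M - S)))\<^sup>2" by simp
    also have "\<dots> = (norm (Z i - S))\<^sup>2 - 2 * inner (Z i - S) (M - S) + (norm (M - S))\<^sup>2"
      by (simp add: power2_norm_eq_inner inner_diff_left inner_diff_right inner_commute)
    finally show ?thesis .
  qed
  have "(\<Sum>i<n. c i * (norm (Z i - M))\<^sup>2) = (\<Sum>i<n. c i * (norm (Z i - S))\<^sup>2)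
      - 2 * inner (\<Sum>i<n. c i *\<^sub>R (Z i - S)) (M - S) + (\<Sum>i<n. c i) * (norm (M - S))\<^sup>2"
    by (simp add: expand algebra_simps sum.distrib sum_subtractf inner_sum_left
        sum_distrib_left sum_distrib_right)
  also have "\<dots> = (\<Sum>i<n. c i * (norm (Z i - S))\<^sup>2) - (\<Sum>i<n. c i) * (norm (M - S))\<^sup>2"
    unfolding weighted_sum_diff_eq[OF assms(1)] M_def[symmetric] by (simp add: power2_norm_eq_inner)
  finally show ?thesis .
qed

definition kirwls_step :: "(real \<Rightarrow> real) \<Rightarrow> nat \<Rightarrow> (nat \<Rightarrow> 'h::real_normed_vector) \<Rightarrow> 'h \<Rightarrow> 'h" where
  "kirwls_step \<phi> n Z \<Sigma> = (\<Sum>i<n. kirwls_weight \<phi> n Z \<Sigma> i *\<^sub>R Z i)"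

lemma map_S_eq_scaleR_kirwls_step:
  assumes "(\<Sum>i<n. \<phi> (norm (Z i - \<Sigma>))) \<noteq> 0"
  shows "map_S \<phi> n Z \<Sigma> = (\<Sum>i<n. \<phi> (norm (Z i - \<Sigma>))) *\<^sub>R (kirwls_step \<phi> n Z \<Sigma> - \<Sigma>)"
  unfolding map_S_def kirwls_step_def kirwls_weight_def by (rule weighted_sum_diff_eq[OF assms])

lemma obj_J_kirwls_step_le:
  fixes Z :: "nat \<Rightarrow> 'h::real_inner"
  assumes majorizer: "\<And>r r0. r \<ge> 0 \<Longrightarrow> r0 \<ge> 0 \<Longrightarrow> \<zeta> r \<le> \<zeta> r0 + \<phi> r0 / 2 * (r\<^sup>2 - r0\<^sup>2)"
    and W: "W = (\<Sum>i<n. \<phi> (norm (Z i - \<Sigma>)))" "W \<noteq> 0"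
  shows "obj_J \<zeta> n Z (kirwls_step \<phi> n Z \<Sigma>) + W / 2 * (norm (kirwls_step \<phi> n Z \<Sigma> - \<Sigma>))\<^sup>2
    \<le> obj_J \<zeta> n Z \<Sigma>"
proof -
  define c where "c i = \<phi> (norm (Z i - \<Sigma>))" for i
  define \<Sigma>' where "\<Sigma>' = kirwls_step \<phi> n Z \<Sigma>"
  have "obj_J \<zeta> n Z \<Sigma>' \<le> (\<Sum>i<n. \<zeta> (norm (Z i - \<Sigma>)) + c i / 2 * ((norm (Z i - \<Sigma>'))\<^sup>2 - (norm (Z i - \<Sigma>))\<^sup>2))"
    unfolding obj_J_def c_def by (intro sum_mono majorizer) auto
  also have "\<dots> = obj_J \<zeta> n Z \<Sigma> + ((\<Sum>i<n. c i * (norm (Z i - \<Sigma>'))\<^sup>2) - (\<Sum>i<n. c i * (norm (Z i - \<Sigma>))\<^sup>2)) / 2"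
    by (simp add: obj_J_def sum.distrib right_diff_distrib sum_subtractf
        flip: sum_divide_distrib diff_divide_distrib)
  also have "\<dots> = obj_J \<zeta> n Z \<Sigma> - W / 2 * (norm (\<Sigma>' - \<Sigma>))\<^sup>2"
    using weighted_sum_sq_dist_mean[of c n Z \<Sigma>] W
    by (simp add: \<Sigma>'_def kirwls_step_def kirwls_weight_def c_def)
  finally show ?thesis unfolding \<Sigma>'_def by simp
qed

lemma kirwls_step_in_convex_hull:
  assumes "\<And>t. t \<ge> 0 \<Longrightarrow> \<phi> t \<ge> 0" "(\<Sum>i<n. \<phi> (norm (Z i - \<Sigma>))) > 0"
  shows "kirwls_step \<phi> n Z \<Sigma> \<in> convex hull (Z ` {..<n})"
  unfolding kirwls_step_def kirwls_weight_def
proof (rule convex_sum)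
  show "(\<Sum>i<n. \<phi> (norm (Z i - \<Sigma>)) / (\<Sum>b<n. \<phi> (norm (Z b - \<Sigma>)))) = 1"
    using assms(2) by (simp add: sum_divide_distrib[symmetric])
qed (use assms in \<open>auto intro: hull_inc\<close>)

lemma continuous_map_S:
  assumes "continuous_on {0..} \<phi>"
  shows "continuous_on UNIV (map_S \<phi> n Z)"
proof -
  have "continuous_on UNIV (\<lambda>\<Sigma>. \<phi> (norm (Z i - \<Sigma>)))" for i
    by (rule continuous_on_compose2[OF assms]) (auto intro!: continuous_intros)
  then show ?thesis
    unfolding map_S_def by (intro continuous_intros)
qed

lemma descent_convergent_decrement_tendsto_zero:
  fixes J d :: "nat \<Rightarrow> real"
  assumes descent: "\<And>h. J (Suc h) + d h \<le> J h"
    and d_nonneg: "\<And>h. d h \<ge> 0" and bounded_below: "\<And>h. b \<le> J h"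
  shows "convergent J" and "d \<longlonglongrightarrow> 0"
proof -
  have "decseq J"
    using descent d_nonneg by (intro decseq_SucI) (metis add_increasing2 order.trans order_refl)
  then obtain L where J_lim: "J \<longlonglongrightarrow> L"
    using decseq_convergent[of J b] bounded_below by blast
  then show "convergent J" by (auto simp: convergent_def)
  have "(\<lambda>h. J h - J (Suc h)) \<longlonglongrightarrow> L - L"
    by (intro tendsto_intros J_lim LIMSEQ_Suc)
  then have decrement_lim: "(\<lambda>h. J h - J (Suc h)) \<longlonglongrightarrow> 0"
    by simp
  show "d \<longlonglongrightarrow> 0"
  proof (rule tendsto_sandwich[where f = "\<lambda>_. 0" and h = "\<lambda>h. J h - J (Suc h)"])
    show "\<forall>\<^sub>F h in sequentially. d h \<le> J h - J (Suc h)"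
      using descent by (simp add: algebra_simps)
  qed (use decrement_lim d_nonneg in simp_all)
qed

lemma infdist_zero_set_tendsto_zero:
  fixes F :: "'a::metric_space \<Rightarrow> 'b::real_normed_vector"
  assumes "compact K" "\<And>h. x h \<in> K" "continuous_on UNIV F" "(\<lambda>h. F (x h)) \<longlonglongrightarrow> 0"
  shows "(\<lambda>h. infdist (x h) {y. F y = 0}) \<longlonglongrightarrow> 0"
proof (rule LIMSEQ_I)
  fix e :: real assume "e > 0"
  define zeros where "zeros = {y. F y = 0}"
  define K_far where "K_far = K \<inter> {y. e \<le> infdist y zeros}"
  \<comment> \<open>\<open>norm \<circ> F\<close> attains a minimum on the compact set \<open>K_far\<close>, and it is not zero there.\<close>
  have "\<exists>\<delta>>0. \<forall>y\<in>K_far. \<delta> \<le> norm (F y)"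
  proof (cases "K_far = {}")
    case False
    have "compact K_far" unfolding K_far_def
      by (intro compact_Int_closed assms(1) closed_Collect_le continuous_on_const
          continuous_on_infdist continuous_on_id)
    moreover have "continuous_on K_far (\<lambda>y. norm (F y))"
      by (intro continuous_intros continuous_on_subset[OF assms(3)]) auto
    ultimately obtain y0 where y0: "y0 \<in> K_far" "\<forall>y\<in>K_far. norm (F y0) \<le> norm (F y)"
      using continuous_attains_inf False by blast
    have "F y0 \<noteq> 0"
      using y0(1) \<open>e > 0\<close> by (auto simp: K_far_def zeros_def)
    with y0 show ?thesis by (intro exI[of _ "norm (F y0)"]) auto
  qed (auto intro: exI[of _ 1])
  then obtain \<delta> where "\<delta> > 0" and \<delta>: "\<And>y. y \<in> K_far \<Longrightarrow> \<delta> \<le> norm (F y)" by blast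
  obtain N where N: "\<And>h. h \<ge> N \<Longrightarrow> norm (F (x h)) < \<delta>"
    using LIMSEQ_D[OF assms(4) \<open>\<delta> > 0\<close>] by auto
  have "infdist (x h) zeros < e" if "h \<ge> N" for h
  proof (rule ccontr)
    assume "\<not> infdist (x h) zeros < e"
    then have "x h \<in> K_far" using assms(2) by (simp add: K_far_def)
    with \<delta> N[OF that] show False by (meson not_le)
  qed
  then show "\<exists>N. \<forall>h\<ge>N. norm (infdist (x h) {y. F y = 0} - 0) < e"
    by (intro exI[of _ N]) (simp add: zeros_def infdist_nonneg)
qed

lemma tendsto_zero_if_norm_power2_le:
  fixes f :: "nat \<Rightarrow> 'a::real_normed_vector"
  assumes bound: "\<And>h. (norm (f h))\<^sup>2 \<le> C * g h" and lim: "g \<longlonglongrightarrow> 0"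
  shows "f \<longlonglongrightarrow> 0"
proof -
  have "(\<lambda>h. C * g h) \<longlonglongrightarrow> 0"
    by (rule tendsto_mult_right_zero[OF lim])
  then have "(\<lambda>h. (norm (f h))\<^sup>2) \<longlonglongrightarrow> 0"
    by (rule tendsto_sandwich[rotated 2, OF tendsto_const]) (simp_all add: bound)
  then have "(\<lambda>h. sqrt ((norm (f h))\<^sup>2)) \<longlonglongrightarrow> sqrt 0"
    by (intro tendsto_intros)
  then have "(\<lambda>h. norm (f h)) \<longlonglongrightarrow> 0"
    by (simp only: real_sqrt_abs abs_norm_cancel real_sqrt_zero)
  then show ?thesis
    by (rule tendsto_norm_zero_cancel)
qed

lemma kirwls_objective_convergence:
  fixes Z :: "nat \<Rightarrow> 'h::real_inner"
  assumes majorizer: "\<And>r r0. r \<ge> 0 \<Longrightarrow> r0 \<ge> 0 \<Longrightarrow> \<zeta> r \<le> \<zeta> r0 + \<phi> r0 / 2 * (r\<^sup>2 - r0\<^sup>2)"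
    and zeta_nonneg: "\<And>t. t \<ge> 0 \<Longrightarrow> \<zeta> t \<ge> 0"
    and phi_le: "\<And>t. t \<ge> 0 \<Longrightarrow> \<phi> t \<le> B"
    and weights_pos: "\<And>h. (\<Sum>i<n. \<phi> (norm (Z i - \<Sigma> h))) > 0"
    and step: "\<And>h. \<Sigma> (Suc h) = kirwls_step \<phi> n Z (\<Sigma> h)"
  shows "obj_J \<zeta> n Z (\<Sigma> (Suc h)) \<le> obj_J \<zeta> n Z (\<Sigma> h)"
    and "convergent (\<lambda>h. obj_J \<zeta> n Z (\<Sigma> h))"
    and "(\<lambda>h. map_S \<phi> n Z (\<Sigma> h)) \<longlonglongrightarrow> 0"
proof -
  define W where "W h = (\<Sum>i<n. \<phi> (norm (Z i - \<Sigma> h)))" for h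
  define gap where "gap h = W h / 2 * (norm (\<Sigma> (Suc h) - \<Sigma> h))\<^sup>2" for h
  have W_pos: "W h > 0" for h
    using weights_pos by (simp add: W_def)
  have gap_nonneg: "gap h \<ge> 0" for h
    using W_pos[of h] by (simp add: gap_def)
  have descent: "obj_J \<zeta> n Z (\<Sigma> (Suc h)) + gap h \<le> obj_J \<zeta> n Z (\<Sigma> h)" for h
    unfolding gap_def step using W_pos[of h]
    by (intro obj_J_kirwls_step_le majorizer) (auto simp: W_def)
  show "obj_J \<zeta> n Z (\<Sigma> (Suc h)) \<le> obj_J \<zeta> n Z (\<Sigma> h)"
    using descent[of h] gap_nonneg[of h] by linarith
  have "obj_J \<zeta> n Z (\<Sigma> h) \<ge> 0" for h
    unfolding obj_J_def by (intro sum_nonneg zeta_nonneg) simp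
  then have obj_convergent: "convergent (\<lambda>h. obj_J \<zeta> n Z (\<Sigma> h))" and gap_lim: "gap \<longlonglongrightarrow> 0"
    using descent_convergent_decrement_tendsto_zero[of "\<lambda>h. obj_J \<zeta> n Z (\<Sigma> h)" gap 0]
      descent gap_nonneg by simp_all
  show "convergent (\<lambda>h. obj_J \<zeta> n Z (\<Sigma> h))"
    by (rule obj_convergent)
  have "(norm (map_S \<phi> n Z (\<Sigma> h)))\<^sup>2 \<le> (2 * n * B) * gap h" for h
  proof -
    have "map_S \<phi> n Z (\<Sigma> h) = W h *\<^sub>R (\<Sigma> (Suc h) - \<Sigma> h)"
      using W_pos[of h] unfolding W_def step by (intro map_S_eq_scaleR_kirwls_step) simp
    then have "(norm (map_S \<phi> n Z (\<Sigma> h)))\<^sup>2 = 2 * W h * gap h"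
      using W_pos[of h] by (simp add: gap_def power2_eq_square)
    also have "\<dots> \<le> 2 * (n * B) * gap h"
      using sum_bounded_above[of "{..<n}" _ B] phi_le gap_nonneg[of h]
      by (intro mult_right_mono) (simp_all add: W_def)
    finally show ?thesis by simp
  qed
  then show "(\<lambda>h. map_S \<phi> n Z (\<Sigma> h)) \<longlonglongrightarrow> 0"
    by (rule tendsto_zero_if_norm_power2_le) (rule gap_lim)
qed

lemma kirwls_infdist_zero_set_U_tendsto_zero:
  fixes Z :: "nat \<Rightarrow> 'h::real_normed_vector"
  assumes phi_nonneg: "\<And>t. t \<ge> 0 \<Longrightarrow> \<phi> t \<ge> 0" and phi_cont: "continuous_on {0..} \<phi>"
    and weights_pos: "\<And>h. (\<Sum>i<n. \<phi> (norm (Z i - \<Sigma> h))) > 0"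
    and step: "\<And>h. \<Sigma> (Suc h) = kirwls_step \<phi> n Z (\<Sigma> h)"
    and residual_lim: "(\<lambda>h. map_S \<phi> n Z (\<Sigma> h)) \<longlonglongrightarrow> 0"
  shows "(\<lambda>h. infdist (\<Sigma> h) (zero_set_U \<phi> n Z)) \<longlonglongrightarrow> 0"
proof (rule LIMSEQ_imp_Suc)
  have "\<Sigma> (Suc h) \<in> convex hull (Z ` {..<n})" for h
    unfolding step using phi_nonneg weights_pos by (rule kirwls_step_in_convex_hull)
  moreover have "(\<lambda>h. map_S \<phi> n Z (\<Sigma> (Suc h))) \<longlonglongrightarrow> 0"
    using residual_lim by (rule LIMSEQ_Suc)
  ultimately show "(\<lambda>h. infdist (\<Sigma> (Suc h)) (zero_set_U \<phi> n Z)) \<longlonglongrightarrow> 0"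
    unfolding zero_set_U_def
    by (intro infdist_zero_set_tendsto_zero[where K = "convex hull (Z ` {..<n})"]
        finite_imp_compact_convex_hull continuous_map_S[OF phi_cont]) auto
qed

theorem theorem3:
  fixes tens :: "'a::{real_inner,complete_space} \<Rightarrow> 'b::{real_inner,complete_space} \<Rightarrow> 'h::{real_inner,complete_space}"
    and n :: nat
    and fx :: "nat \<Rightarrow> 'a" and fy :: "nat \<Rightarrow> 'b"
    and \<zeta> \<zeta>' \<phi> :: "real \<Rightarrow> real"
    and \<Sigma> :: "nat \<Rightarrow> 'h"
  assumes tensor: "is_hilbert_tensor tens"
    and zeta_mono: "mono_on {0..} \<zeta>"
    and zeta_0: "\<zeta> 0 = 0"
    and zeta_lim: "((\<lambda>t. \<zeta> t / t) \<longlongrightarrow> 0) (at_right 0)"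
    and zeta_deriv: "\<And>t. t \<ge> 0 \<Longrightarrow> (\<zeta> has_real_derivative \<zeta>' t) (at t within {0..})"
    and phi_def: "\<And>t. t > 0 \<Longrightarrow> \<phi> t = \<zeta>' t / t"
    and zeta'_cont: "continuous_on {0..} \<zeta>'"
    and phi_cont: "continuous_on {0..} \<phi>"
    and zeta'_bdd: "bounded (\<zeta>' ` {0..})"
    and phi_bdd: "bounded (\<phi> ` {0..})"
    and phi_antimono: "antimono_on {0..} \<phi>"
    and denom_pos: "\<And>h. (\<Sum>b<n. \<phi> (norm (tens (fx b) (fy b) - \<Sigma> h))) > 0"
    and kirwls: "\<And>h. \<Sigma> (Suc h) =
        (\<Sum>i<n. kirwls_weight \<phi> n (\<lambda>i. tens (fx i) (fy i)) (\<Sigma> h) i *\<^sub>R tens (fx i) (fy i))"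
  shows "(\<forall>h. obj_J \<zeta> n (\<lambda>i. tens (fx i) (fy i)) (\<Sigma> (Suc h))
              \<le> obj_J \<zeta> n (\<lambda>i. tens (fx i) (fy i)) (\<Sigma> h))
       \<and> convergent (\<lambda>h. obj_J \<zeta> n (\<lambda>i. tens (fx i) (fy i)) (\<Sigma> h))
       \<and> (\<lambda>h. infdist (\<Sigma> h) (zero_set_U \<phi> n (\<lambda>i. tens (fx i) (fy i)))) \<longlonglongrightarrow> 0"
proof -
  define Z where "Z = (\<lambda>i. tens (fx i) (fy i))"
  have step: "\<Sigma> (Suc h) = kirwls_step \<phi> n Z (\<Sigma> h)" for h
    using kirwls by (simp add: kirwls_step_def Z_def)
  have weights_pos: "(\<Sum>i<n. \<phi> (norm (Z i - \<Sigma> h))) > 0" for h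
    using denom_pos by (simp add: Z_def)
  have majorizer: "\<zeta> r \<le> \<zeta> r0 + \<phi> r0 / 2 * (r\<^sup>2 - r0\<^sup>2)" if "r \<ge> 0" "r0 \<ge> 0" for r r0
    using quadratic_majorizer[OF zeta_deriv phi_def phi_antimono that] .
  have zeta_nonneg: "\<zeta> t \<ge> 0" if "t \<ge> 0" for t
    using monotone_onD[OF zeta_mono, of 0 t] that zeta_0 by simp
  have phi_nonneg: "\<phi> t \<ge> 0" if "t \<ge> 0" for t
    using derivative_ratio_nonneg[OF zeta_mono zeta_deriv phi_def phi_antimono that] .
  obtain B where "\<forall>t\<in>{0..}. norm (\<phi> t) \<le> B"
    using phi_bdd by (auto simp: bounded_iff)
  then have phi_le: "\<phi> t \<le> B" if "t \<ge> 0" for t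
    using that abs_le_D1[of "\<phi> t" B] by simp
  note objective = kirwls_objective_convergence[where Z = Z and \<Sigma> = \<Sigma>,
      OF majorizer zeta_nonneg phi_le weights_pos step]
  have "(\<lambda>h. infdist (\<Sigma> h) (zero_set_U \<phi> n Z)) \<longlonglongrightarrow> 0"
    using phi_nonneg phi_cont weights_pos step objective(3)
    by (rule kirwls_infdist_zero_set_U_tendsto_zero)
  with objective(1,2) show ?thesis
    unfolding Z_def by blast
qed

end
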